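(* Let $f\in GM$ be real-valued and $\alpha\in\mathbb{R}$. If $t^{2\alpha+1}f(t)\in L^1(0,1)$ and the improper integral $\int_0^\infty t^{2\alpha+1}f(t)\,dt$ converges, then $M_{2\alpha+2}(f):=\sup_{t\in\mathbb{R}_+}t^{2\alpha+2}|f(t)|<\infty$.
   Context: $\mathbb{R}_+=[0,\infty)$. All functions $f:\mathbb{R}_+\to\mathbb{C}$ considered are locally integrable, locally of bounded variation on $(0,\infty)$, and satisfy $f(t)\to 0$ as $t\to\infty$. Integrals over infinite intervals are improper Riemann integrals. Such an $f$ is called general monotone, written $f\in GM$, if there exist constants $C>1$ and $\lambda>1$ such that for every $x>0$, $$\int_x^{2x}|df(t)|\le C\int_{x/\lambda}^{\lambda x}\frac{|f(t)|}{t}\,dt,$$ where $|df|$ denotes the total variation measure of $f$. *)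

theory Defs
  imports "HOL-Analysis.Analysis"
begin

definition variation_sums :: "(real \<Rightarrow> 'a::real_normed_vector) \<Rightarrow> real \<Rightarrow> real \<Rightarrow> real set" where
  "variation_sums f a b =
     {(\<Sum>i<n. norm (f (x (Suc i)) - f (x i))) | x n.
        x 0 = a \<and> x n = b \<and> (\<forall>i<n. x i \<le> x (Suc i))}"

definition variation :: "(real \<Rightarrow> 'a::real_normed_vector) \<Rightarrow> real \<Rightarrow> real \<Rightarrow> real" where
  "variation f a b = Sup (variation_sums f a b)"

text \<open>General monotone functions (standing assumptions included).\<close>
definition GM :: "(real \<Rightarrow> 'a::euclidean_space) \<Rightarrow> bool" where
  "GM f \<longleftrightarrow>
     (\<forall>b\<ge>0. f absolutely_integrable_on {0..b}) \<and>
     (\<forall>a b. 0 < a \<and> a \<le> b \<longrightarrow> bdd_above (variation_sums f a b)) \<and>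
     (f \<longlongrightarrow> 0) at_top \<and>
     (\<exists>C>1. \<exists>lam>1. \<forall>x>0.
        variation f x (2 * x) \<le> C * integral {x / lam .. lam * x} (\<lambda>t. norm (f t) / t))"

end

theory Submission
  imports Defs
begin

text \<open>
  Put w(t) = t powr beta * f(t) with beta = 2 alpha + 1. Since the integrals of w over [0, R]
  converge, all integrals of w over subintervals of [0, inf) are bounded by one constant K. Cut
  [x, 2x] into n equal pieces: on each piece the integral of |w| exceeds the absolute value of
  the integral of w by at most twice the oscillation of f times the integral of t powr beta, and
  the oscillations add up to the variation of f on [x, 2x], which the GM condition bounds by the
  |w|-mass of [x / lam, lam x]. That mass is covered by m dyadic blocks [y, 2y], so the running
  supremum U(R) of the |w|-mass N(y) of [y, 2y] over y \<le> R satisfies U(R) \<le> n K + eps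
  U(theta R), with eps = O(1/n) as small as we like. Because f tends to 0, U grows at most
  polynomially, and iterating the recursion shows that N is bounded. Finally the GM condition
  bounds |f(y)| by y powr -(beta + 1) times the |w|-mass of [y / lam, lam y].
\<close>

lemma norm_diff_in_variation_sums:
  assumes "a \<le> b"
  shows "norm (f b - f a) \<in> variation_sums f a b"
  unfolding variation_sums_def using assms
  by (intro CollectI exI[of _ "\<lambda>i. if i = 0 then a else b"] exI[of _ 1]) auto

lemma variation_nonneg:
  assumes "bdd_above (variation_sums f a b)" "a \<le> b"
  shows "0 \<le> variation f a b"
  unfolding variation_def
  using cSup_upper[OF norm_diff_in_variation_sums[OF assms(2)] assms(1)] norm_ge_zero order_trans by blast

lemma variation_sum_le_variation:
  assumes "bdd_above (variation_sums f a b)"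
    and "x 0 = a" "x n = b" "\<forall>i<n. x i \<le> x (Suc i)"
  shows "(\<Sum>i<n. norm (f (x (Suc i)) - f (x i))) \<le> variation f a b"
  unfolding variation_def using assms
  by (intro cSup_upper) (auto simp: variation_sums_def)

lemma norm_diff_le_variation:
  assumes "bdd_above (variation_sums f a b)"
    and "a \<le> s" "s \<le> b" "a \<le> t" "t \<le> b"
  shows "norm (f t - f s) \<le> variation f a b"
proof -
  have "norm (f v - f u) \<le> variation f a b" if "a \<le> u" "u \<le> v" "v \<le> b" for u v
  proof -
    define x where "x i = [a, u, v, b] ! i" for i
    have "norm (f v - f u) \<le> (\<Sum>i<3. norm (f (x (Suc i)) - f (x i)))"
      by (simp add: x_def numeral_3_eq_3 lessThan_Suc)
    also have "\<dots> \<le> variation f a b"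
      using that by (intro variation_sum_le_variation[OF assms(1)])
        (auto simp: x_def less_Suc_eq numeral_3_eq_3)
    finally show ?thesis .
  qed
  from this[of s t] this[of t s] assms(2-) show ?thesis
    by (cases "s \<le> t") (auto simp: norm_minus_commute)
qed

lemma variation_sums_concat:
  assumes "s \<in> variation_sums f a c" "s' \<in> variation_sums f c b"
  shows "s + s' \<in> variation_sums f a b"
proof -
  obtain x n where x: "x 0 = a" "x n = c" "\<forall>i<n. x i \<le> x (Suc i)"
    and s: "s = (\<Sum>i<n. norm (f (x (Suc i)) - f (x i)))"
    using assms(1) unfolding variation_sums_def by blast
  obtain x' n' where x': "x' 0 = c" "x' n' = b" "\<forall>i<n'. x' i \<le> x' (Suc i)"
    and s': "s' = (\<Sum>i<n'. norm (f (x' (Suc i)) - f (x' i)))"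
    using assms(2) unfolding variation_sums_def by blast
  define y where "y i = (if i \<le> n then x i else x' (i - n))" for i
  define g where "g i = norm (f (y (Suc i)) - f (y i))" for i
  have "(\<Sum>i<n + n'. norm (f (y (Suc i)) - f (y i)))
      = (\<Sum>i<n. norm (f (y (Suc i)) - f (y i))) + (\<Sum>i<n'. norm (f (y (Suc (n + i))) - f (y (n + i))))"
    using sum.atLeastLessThan_concat[of 0 n "n + n'" g] sum.shift_bounds_nat_ivl[of g 0 n n']
    by (simp add: atLeast0LessThan add.commute g_def)
  also have "\<dots> = s + s'"
    using x(2) x'(1) by (auto simp: s s' y_def intro!: sum.cong)
  finally have "s + s' = (\<Sum>i<n + n'. norm (f (y (Suc i)) - f (y i)))" by simp
  moreover have "\<forall>i<n + n'. y i \<le> y (Suc i)"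
  proof (intro allI impI)
    fix i assume i: "i < n + n'"
    consider "i < n" | "i = n" | "n < i" by linarith
    then show "y i \<le> y (Suc i)"
      by cases (use x x' i in \<open>auto simp: y_def Suc_diff_le\<close>)
  qed
  moreover have "y 0 = a" "y (n + n') = b"
    using x x' by (auto simp: y_def)
  ultimately show ?thesis unfolding variation_sums_def by blast
qed

lemma variation_superadditive:
  assumes bdd: "bdd_above (variation_sums f a b)" and "a \<le> c" "c \<le> b"
  shows "variation f a c + variation f c b \<le> variation f a b"
proof -
  have "s \<le> variation f a b - s'"
    if "s \<in> variation_sums f a c" "s' \<in> variation_sums f c b" for s s'
    using cSup_upper[OF variation_sums_concat[OF that] bdd] unfolding variation_def by simp
  then have "variation f a c \<le> variation f a b - s'" if "s' \<in> variation_sums f c b" for s'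
    unfolding variation_def using that \<open>a \<le> c\<close> by (intro cSup_least) (auto dest: norm_diff_in_variation_sums[of _ _ f])
  then have "variation f c b \<le> variation f a b - variation f a c"
    unfolding variation_def[of f c b] using \<open>c \<le> b\<close>
    by (intro cSup_least) (auto simp: algebra_simps dest: norm_diff_in_variation_sums[of _ _ f])
  then show ?thesis by simp
qed

lemma sum_variation_le_variation:
  assumes mono: "\<And>i. z i \<le> z (Suc i)"
    and bdd: "\<And>k. k \<le> n \<Longrightarrow> bdd_above (variation_sums f (z 0) (z k))"
  shows "(\<Sum>i<n. variation f (z i) (z (Suc i))) \<le> variation f (z 0) (z n)"
  using bdd
proof (induction n)
  case (Suc n)
  have "(\<Sum>i<Suc n. variation f (z i) (z (Suc i)))
      \<le> variation f (z 0) (z n) + variation f (z n) (z (Suc n))"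
    using Suc by simp
  also have "\<dots> \<le> variation f (z 0) (z (Suc n))"
    using lift_Suc_mono_le[of z 0 n] mono by (intro variation_superadditive Suc.prems) auto
  finally show ?case .
qed (simp add: variation_nonneg)

lemma absolutely_integrable_continuous_mult:
  fixes g h :: "real \<Rightarrow> real"
  assumes "continuous_on {a..b} g" "h absolutely_integrable_on {a..b}"
  shows "(\<lambda>t. g t * h t) absolutely_integrable_on {a..b}"
proof -
  have "g \<in> borel_measurable (lebesgue_on {a..b})"
    using assms(1) by (intro continuous_imp_measurable_on_sets_lebesgue)
      (use fmeasurableD[OF lmeasurable_interval(1)] in auto)
  moreover have "bounded (g ` {a..b})"
    using assms(1) by (intro compact_imp_bounded compact_continuous_image) auto
  ultimately show ?thesis
    using absolutely_integrable_bounded_measurable_product_real[of g "{a..b}" h] assms(2) by auto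
qed

lemma abs_div_integrable:
  fixes f :: "real \<Rightarrow> real"
  assumes "f absolutely_integrable_on {a..b}" "0 < a"
  shows "(\<lambda>t. \<bar>f t\<bar> / t) integrable_on {a..b}"
proof -
  have "(\<lambda>t. (1 / t) * \<bar>f t\<bar>) absolutely_integrable_on {a..b}"
    using assms absolutely_integrable_abs[OF assms(1)]
    by (intro absolutely_integrable_continuous_mult continuous_intros) auto
  then show ?thesis
    by (simp add: absolutely_integrable_on_def)
qed

lemma integral_sum_subintervals:
  fixes g :: "real \<Rightarrow> real"
  assumes "\<And>i. z i \<le> z (Suc i)" and "g integrable_on {z 0..z n}"
  shows "integral {z 0..z n} g = (\<Sum>i<n. integral {z i..z (Suc i)} g)"
  using assms(2)
proof (induction n)
  case (Suc n)
  have "z 0 \<le> z n" "z n \<le> z (Suc n)"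
    using lift_Suc_mono_le[of z 0 n] assms(1) by auto
  moreover from this have "g integrable_on {z 0..z n}"
    using integrable_on_subinterval[OF Suc.prems] by auto
  ultimately show ?case
    using Suc.IH Henstock_Kurzweil_Integration.integral_combine[OF _ _ Suc.prems, of "z n"] by simp
qed simp

lemma interval_integrals_bounded:
  fixes g :: "real \<Rightarrow> real"
  assumes int: "\<And>b. g integrable_on {0..b}"
    and lim: "((\<lambda>R. integral {0..R} g) \<longlongrightarrow> L) at_top"
  shows "\<exists>K. \<forall>a b. 0 \<le> a \<longrightarrow> a \<le> b \<longrightarrow> \<bar>integral {a..b} g\<bar> \<le> K"
proof -
  obtain R1 where R1: "\<And>R. R \<ge> R1 \<Longrightarrow> dist (integral {0..R} g) L < 1"
    using tendstoD[OF lim, of 1] by (auto simp: eventually_at_top_linorder)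
  have "compact ((\<lambda>R. integral {0..R} g) ` {0..R1})"
    by (intro compact_continuous_image indefinite_integral_continuous_1 int) simp
  then obtain K1 where "\<forall>v \<in> (\<lambda>R. integral {0..R} g) ` {0..R1}. \<bar>v\<bar> \<le> K1"
    using compact_imp_bounded bounded_real by blast
  then have K1: "\<And>R. R \<in> {0..R1} \<Longrightarrow> \<bar>integral {0..R} g\<bar> \<le> K1"
    by blast
  have bound: "\<bar>integral {0..R} g\<bar> \<le> max K1 (\<bar>L\<bar> + 1)" if "0 \<le> R" for R
  proof (cases "R \<le> R1")
    case True
    then show ?thesis using K1[of R] that by simp
  next
    case False
    then have "\<bar>integral {0..R} g - L\<bar> < 1"
      using R1[of R] by (simp add: dist_real_def)
    then show ?thesis
      using abs_triangle_ineq2[of "integral {0..R} g" L] max.cobounded2[of "\<bar>L\<bar> + 1" K1]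
      by linarith
  qed
  have "\<bar>integral {a..b} g\<bar> \<le> 2 * max K1 (\<bar>L\<bar> + 1)" if "0 \<le> a" "a \<le> b" for a b
  proof -
    have "integral {0..a} g + integral {a..b} g = integral {0..b} g"
      using that by (intro Henstock_Kurzweil_Integration.integral_combine int) auto
    then have split: "integral {a..b} g = integral {0..b} g - integral {0..a} g"
      by linarith
    have "\<bar>integral {0..b} g\<bar> \<le> max K1 (\<bar>L\<bar> + 1)"
      using that by (intro bound) linarith
    then show ?thesis
      unfolding split
      using bound[OF that(1)] abs_triangle_ineq4[of "integral {0..b} g" "integral {0..a} g"]
      by linarith
  qed
  then show ?thesis by blast
qed

lemma integral_abs_le_abs_integral_oscillation:
  fixes q g :: "real \<Rightarrow> real"
  assumes q_int: "q integrable_on {c..e}"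
    and qg_int: "(\<lambda>t. q t * g t) integrable_on {c..e}"
    and abs_qg_int: "(\<lambda>t. \<bar>q t * g t\<bar>) integrable_on {c..e}"
    and q_nonneg: "\<And>t. t \<in> {c..e} \<Longrightarrow> 0 \<le> q t"
    and osc: "\<And>t. t \<in> {c..e} \<Longrightarrow> \<bar>g t - g s\<bar> \<le> d"
  shows "integral {c..e} (\<lambda>t. \<bar>q t * g t\<bar>)
    \<le> \<bar>integral {c..e} (\<lambda>t. q t * g t)\<bar> + 2 * d * integral {c..e} q"
proof -
  define I where "I = integral {c..e} q"
  have I_nonneg: "0 \<le> I"
    unfolding I_def using q_int q_nonneg by (intro integral_nonneg) auto
  have "integral {c..e} (\<lambda>t. \<bar>q t * g t\<bar>) \<le> integral {c..e} (\<lambda>t. q t * (\<bar>g s\<bar> + d))"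
  proof (rule integral_le[OF abs_qg_int integrable_on_mult_left[OF q_int]])
    fix t assume "t \<in> {c..e}"
    then show "\<bar>q t * g t\<bar> \<le> q t * (\<bar>g s\<bar> + d)"
      using q_nonneg[of t] osc[of t] by (auto simp: abs_mult intro!: mult_left_mono)
  qed
  also have "\<dots> = I * (\<bar>g s\<bar> + d)"
    unfolding I_def by simp
  finally have upper: "integral {c..e} (\<lambda>t. \<bar>q t * g t\<bar>) \<le> I * \<bar>g s\<bar> + I * d"
    by (simp add: distrib_left)
  have "\<bar>integral {c..e} (\<lambda>t. q t * g t) - I * g s\<bar>
      = \<bar>integral {c..e} (\<lambda>t. q t * (g t - g s))\<bar>"
    unfolding I_def using qg_int integrable_on_mult_left[OF q_int, of "g s"]
    by (simp add: right_diff_distrib integral_diff)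
  also have "\<dots> \<le> integral {c..e} (\<lambda>t. q t * d)"
  proof -
    have int: "(\<lambda>t. q t * (g t - g s)) integrable_on {c..e}"
      using integrable_diff[OF qg_int integrable_on_mult_left[OF q_int, of "g s"]]
      by (simp add: right_diff_distrib)
    have "\<bar>q t * (g t - g s)\<bar> \<le> q t * d" if "t \<in> {c..e}" for t
      using q_nonneg[OF that] osc[OF that] by (auto simp: abs_mult intro!: mult_left_mono)
    then show ?thesis
      using integral_norm_bound_integral[OF int integrable_on_mult_left[OF q_int, of d]] by simp
  qed
  also have "\<dots> = I * d"
    unfolding I_def by simp
  finally have "I * \<bar>g s\<bar> \<le> \<bar>integral {c..e} (\<lambda>t. q t * g t)\<bar> + I * d"
    using I_nonneg by (simp add: abs_mult)
  with upper show ?thesis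
    unfolding I_def by (simp add: algebra_simps)
qed

lemma powr_le_add_powr_endpoints:
  fixes a t b q :: real
  assumes "0 < a" "a \<le> t" "t \<le> b"
  shows "t powr q \<le> a powr q + b powr q"
proof (cases "q \<ge> 0")
  case True
  then have "t powr q \<le> b powr q" using assms by (intro powr_mono2) auto
  then show ?thesis by (simp add: add_increasing)
next
  case False
  then have "t powr q \<le> a powr q" using assms by (intro powr_mono2') auto
  then show ?thesis by (simp add: add_increasing2)
qed

lemma powr_le_on_dilation:
  fixes x lam t q :: real
  assumes "0 < x" "0 < lam" "x / lam \<le> t" "t \<le> lam * x"
  shows "t powr q \<le> x powr q * (lam powr q + lam powr - q)"
proof -
  have "t powr q \<le> (x / lam) powr q + (lam * x) powr q"
    using assms by (intro powr_le_add_powr_endpoints) auto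
  also have "\<dots> = x powr q * (lam powr q + lam powr - q)"
  proof -
    have "(x / lam) powr q = x powr q * lam powr - q"
      using assms by (simp add: powr_divide powr_minus_divide)
    moreover have "(lam * x) powr q = x powr q * lam powr q"
      using assms by (simp add: powr_mult)
    ultimately show ?thesis
      by (simp add: distrib_left)
  qed
  finally show ?thesis .
qed

lemma integral_powr_le_doubling:
  fixes y u v q :: real
  assumes "0 < y" "y \<le> u" "u \<le> v" "v \<le> 2 * y"
  shows "integral {u..v} (\<lambda>t. t powr q) \<le> (v - u) * ((1 + 2 powr q) * y powr q)"
proof -
  have "integral {u..v} (\<lambda>t. t powr q) \<le> integral {u..v} (\<lambda>t. (1 + 2 powr q) * y powr q)"
  proof (rule integral_le)
    show "(\<lambda>t. t powr q) integrable_on {u..v}"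
      using assms by (intro integrable_continuous_interval continuous_intros) auto
    fix t assume "t \<in> {u..v}"
    then have "t powr q \<le> y powr q + (2 * y) powr q"
      using assms by (intro powr_le_add_powr_endpoints) auto
    then show "t powr q \<le> (1 + 2 powr q) * y powr q"
      using assms by (simp add: powr_mult algebra_simps)
  qed (intro integrable_continuous_interval continuous_intros)
  then show ?thesis
    using assms by (simp add: mult_ac)
qed

text \<open>
  Iterating the recurrence gives U R \<le> E / (1 - eps) + eps ^ i * U (theta ^ i * R), and the
  polynomial a priori bound kills the last term because eps * theta powr p < 1.
\<close>

lemma bounded_of_dilation_recurrence:
  fixes U :: "real \<Rightarrow> real"
  assumes \<theta>: "0 < \<theta>" and \<epsilon>: "0 \<le> \<epsilon>" "\<epsilon> < 1" "\<epsilon> * \<theta> powr p < 1" and E: "0 \<le> E"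
    and recurrence: "\<And>R. 0 < R \<Longrightarrow> U R \<le> E + \<epsilon> * U (\<theta> * R)"
    and growth: "\<And>R. 0 < R \<Longrightarrow> U R \<le> a + c * R powr p"
    and R: "0 < R"
  shows "U R \<le> E / (1 - \<epsilon>)"
proof -
  have iterate: "U R \<le> E / (1 - \<epsilon>) + \<epsilon> ^ i * U (\<theta> ^ i * R)" if "0 < R" for i R
    using that
  proof (induction i arbitrary: R)
    case 0
    then show ?case using E \<epsilon> by simp
  next
    case (Suc i)
    have "U (\<theta> * R) \<le> E / (1 - \<epsilon>) + \<epsilon> ^ i * U (\<theta> ^ i * (\<theta> * R))"
      using Suc.IH Suc.prems \<theta> by simp
    then have "U R \<le> E + \<epsilon> * (E / (1 - \<epsilon>) + \<epsilon> ^ i * U (\<theta> ^ i * (\<theta> * R)))"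
      using recurrence[OF Suc.prems] mult_left_mono[OF _ \<epsilon>(1)] by fastforce
    also have "\<dots> = E / (1 - \<epsilon>) + \<epsilon> ^ Suc i * U (\<theta> ^ Suc i * R)"
      using \<epsilon> by (simp add: field_simps)
    finally show ?case .
  qed
  define s where "s i = \<epsilon> ^ i * a + c * R powr p * (\<epsilon> * \<theta> powr p) ^ i" for i
  have bound: "U R \<le> E / (1 - \<epsilon>) + s i" for i
  proof -
    have "\<epsilon> ^ i * U (\<theta> ^ i * R) \<le> \<epsilon> ^ i * (a + c * (\<theta> ^ i * R) powr p)"
      using growth[of "\<theta> ^ i * R"] \<theta> R \<epsilon> by (simp add: mult_left_mono)
    also have "\<dots> = s i"
      using \<theta> R by (simp add: s_def powr_mult powr_realpow[symmetric] powr_powr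
          power_mult_distrib algebra_simps flip: powr_realpow)
    finally show ?thesis using iterate[OF R, of i] by linarith
  qed
  have lim: "(\<lambda>i. E / (1 - \<epsilon>) + s i) \<longlonglongrightarrow> E / (1 - \<epsilon>) + (0 * a + c * R powr p * 0)"
    unfolding s_def using \<epsilon> \<theta>
    by (intro tendsto_intros LIMSEQ_power_zero) (auto intro: mult_nonneg_nonneg)
  show ?thesis
    using LIMSEQ_le_const[OF lim] bound by auto
qed

locale gm_function =
  fixes f :: "real \<Rightarrow> real" and C lam :: real
  assumes locally_integrable: "\<And>b. 0 \<le> b \<Longrightarrow> f absolutely_integrable_on {0..b}"
    and bounded_variation: "\<And>a b. 0 < a \<Longrightarrow> a \<le> b \<Longrightarrow> bdd_above (variation_sums f a b)"
    and tendsto_zero: "(f \<longlongrightarrow> 0) at_top"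
    and C_nonneg: "0 \<le> C"
    and lam_ge_2: "2 \<le> lam"
    and variation_le:
      "\<And>x. 0 < x \<Longrightarrow> variation f x (2 * x) \<le> C * integral {x / lam..lam * x} (\<lambda>t. \<bar>f t\<bar> / t)"
begin

lemma absolutely_integrable_interval: "0 \<le> a \<Longrightarrow> f absolutely_integrable_on {a..b}"
  by (rule absolutely_integrable_on_subinterval[OF locally_integrable[of "max 0 b"]]) auto

lemma abs_le_integral_abs_div:
  assumes y: "0 < y"
  shows "\<bar>f y\<bar> \<le> (C + 2) * integral {y / lam..lam * y} (\<lambda>t. \<bar>f t\<bar> / t)"
proof -
  define V where "V = variation f y (2 * y)"
  define A where "A = integral {y / lam..lam * y} (\<lambda>t. \<bar>f t\<bar> / t)"
  have int: "(\<lambda>t. \<bar>f t\<bar> / t) integrable_on {a..b}" if "0 < a" for a b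
    using abs_div_integrable[OF absolutely_integrable_interval] that by auto
  have "y * ((\<bar>f y\<bar> - V) / (2 * y)) = integral {y..2 * y} (\<lambda>t. (\<bar>f y\<bar> - V) / (2 * y))"
    using y by simp
  also have "\<dots> \<le> integral {y..2 * y} (\<lambda>t. \<bar>f t\<bar> / t)"
  proof (rule integral_le)
    fix t assume t: "t \<in> {y..2 * y}"
    have "\<bar>f t - f y\<bar> \<le> V"
      unfolding V_def using norm_diff_le_variation[OF bounded_variation] y t by simp
    then have "(\<bar>f y\<bar> - V) / (2 * y) \<le> \<bar>f t\<bar> / (2 * y)"
      using y by (intro divide_right_mono) auto
    also have "\<dots> \<le> \<bar>f t\<bar> / t"
      using t y by (intro divide_left_mono) auto
    finally show "(\<bar>f y\<bar> - V) / (2 * y) \<le> \<bar>f t\<bar> / t" .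
  qed (use int y in auto)
  also have "\<dots> \<le> A"
  proof -
    have "0 < y / lam" "y / lam \<le> y" "2 * y \<le> lam * y"
      using y lam_ge_2 by (auto simp: divide_le_eq)
    then show ?thesis
      unfolding A_def by (intro integral_subset_le int) auto
  qed
  finally have "(\<bar>f y\<bar> - V) / 2 \<le> A"
    using y by simp
  then have "\<bar>f y\<bar> \<le> V + 2 * A"
    by (simp add: field_simps)
  also have "\<dots> \<le> (C + 2) * A"
    using variation_le[OF y] unfolding V_def A_def by (simp add: algebra_simps)
  finally show ?thesis
    unfolding A_def .
qed

end

text \<open>
  Enlarging lam only enlarges the right-hand side of the GM inequality, so we may assume
  lam \<ge> 2; then [y, 2 y] lies inside [y / lam, lam y].
\<close>

lemma GM_imp_gm_function:
  fixes f :: "real \<Rightarrow> real"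
  assumes "GM f"
  obtains C lam where "gm_function f C lam"
proof -
  obtain C lam where C: "C > 1" and lam: "lam > 1"
    and integrable: "\<forall>b\<ge>0. f absolutely_integrable_on {0..b}"
    and bdd: "\<forall>a b. 0 < a \<and> a \<le> b \<longrightarrow> bdd_above (variation_sums f a b)"
    and lim: "(f \<longlongrightarrow> 0) at_top"
    and var: "\<forall>x>0. variation f x (2 * x) \<le> C * integral {x / lam..lam * x} (\<lambda>t. norm (f t) / t)"
    using assms unfolding GM_def by blast
  have integrable_on: "f absolutely_integrable_on {a..b}" if "0 \<le> a" for a b
    by (rule absolutely_integrable_on_subinterval[where S = "{0..max 0 b}"]) (use integrable that in auto)
  have variation_le: "variation f x (2 * x) \<le> C * integral {x / max 2 lam..max 2 lam * x} (\<lambda>t. \<bar>f t\<bar> / t)"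
    if x: "0 < x" for x
  proof -
    have "0 < x / max 2 lam" "0 < x / lam" "x / lam \<le> x" "x \<le> lam * x"
      using x lam by (simp_all add: divide_le_eq)
    moreover have "lam * x \<le> max 2 lam * x"
      using x by (intro mult_right_mono) auto
    moreover have "x / max 2 lam \<le> x / lam"
      using x lam by (intro divide_left_mono) auto
    ultimately have "integral {x / lam..lam * x} (\<lambda>t. \<bar>f t\<bar> / t)
        \<le> integral {x / max 2 lam..max 2 lam * x} (\<lambda>t. \<bar>f t\<bar> / t)"
      by (intro integral_subset_le abs_div_integrable integrable_on) auto
    then have "C * integral {x / lam..lam * x} (\<lambda>t. \<bar>f t\<bar> / t)
        \<le> C * integral {x / max 2 lam..max 2 lam * x} (\<lambda>t. \<bar>f t\<bar> / t)"
      using C by (intro mult_left_mono) auto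
    moreover have "variation f x (2 * x) \<le> C * integral {x / lam..lam * x} (\<lambda>t. \<bar>f t\<bar> / t)"
      using var x by simp
    ultimately show ?thesis
      by linarith
  qed
  have "gm_function f C (max 2 lam)"
    by unfold_locales (use C integrable bdd lim variation_le in \<open>simp_all\<close>)
  then show ?thesis ..
qed

locale gm_moment = gm_function +
  fixes \<beta> L :: real
  assumes integrable_near_zero: "(\<lambda>t. t powr \<beta> * f t) absolutely_integrable_on {0<..<1}"
    and integral_tendsto: "((\<lambda>R. integral {0..R} (\<lambda>t. t powr \<beta> * f t)) \<longlongrightarrow> L) at_top"
begin

definition w :: "real \<Rightarrow> real" where "w = (\<lambda>t. t powr \<beta> * f t)"

lemma w_absolutely_integrable:
  assumes "0 \<le> a"
  shows "w absolutely_integrable_on {a..b}"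
proof -
  have "w absolutely_integrable_on {0..1}"
    using integrable_near_zero absolutely_integrable_on_Icc_iff_Ioo unfolding w_def by blast
  moreover have "w absolutely_integrable_on {1..max 1 b}"
    unfolding w_def
    by (intro absolutely_integrable_continuous_mult continuous_intros absolutely_integrable_interval) auto
  ultimately have "w absolutely_integrable_on {0..max 1 b}"
    by (rule absolutely_integrable_on_combine) auto
  then show ?thesis
    by (rule absolutely_integrable_on_subinterval) (use assms in auto)
qed

lemma w_integrable: "0 \<le> a \<Longrightarrow> w integrable_on {a..b}"
  using w_absolutely_integrable[of a b] unfolding absolutely_integrable_on_def by simp

lemma abs_w_integrable: "0 \<le> a \<Longrightarrow> (\<lambda>t. \<bar>w t\<bar>) integrable_on {a..b}"
  using w_absolutely_integrable[of a b] unfolding absolutely_integrable_on_def by simp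

lemma integral_w_bounded:
  obtains K where "0 \<le> K" "\<And>a b. 0 \<le> a \<Longrightarrow> a \<le> b \<Longrightarrow> \<bar>integral {a..b} w\<bar> \<le> K"
proof -
  obtain K where K: "\<forall>a b. 0 \<le> a \<longrightarrow> a \<le> b \<longrightarrow> \<bar>integral {a..b} w\<bar> \<le> K"
    using interval_integrals_bounded[of w L] w_integrable integral_tendsto
    unfolding w_def by blast
  moreover from K have "0 \<le> K"
    by force
  ultimately show ?thesis
    using that by blast
qed

definition N :: "real \<Rightarrow> real" where
  "N y = integral {y..2 * y} (\<lambda>t. \<bar>w t\<bar>)"

definition W :: "real \<Rightarrow> real" where
  "W x = integral {x / lam..lam * x} (\<lambda>t. \<bar>w t\<bar>)"

definition \<Lambda> :: real where
  "\<Lambda> = lam powr (\<beta> + 1) + lam powr - (\<beta> + 1)"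

lemma integral_abs_w_le_variation:
  fixes K :: real
  assumes y: "0 < y" "y \<le> u" "u \<le> v" "v \<le> 2 * y"
    and K: "\<And>a b. 0 \<le> a \<Longrightarrow> a \<le> b \<Longrightarrow> \<bar>integral {a..b} w\<bar> \<le> K"
  shows "integral {u..v} (\<lambda>t. \<bar>w t\<bar>)
    \<le> K + 2 * variation f u v * ((v - u) * ((1 + 2 powr \<beta>) * y powr \<beta>))"
proof -
  have u: "0 < u" "u \<le> v"
    using y by auto
  have "integral {u..v} (\<lambda>t. \<bar>w t\<bar>)
      \<le> \<bar>integral {u..v} w\<bar> + 2 * variation f u v * integral {u..v} (\<lambda>t. t powr \<beta>)"
    unfolding w_def
  proof (rule integral_abs_le_abs_integral_oscillation)
    show "(\<lambda>t. t powr \<beta>) integrable_on {u..v}"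
      using u by (intro integrable_continuous_interval continuous_intros) auto
    show "(\<lambda>t. t powr \<beta> * f t) integrable_on {u..v}"
      using w_integrable u unfolding w_def by simp
    show "(\<lambda>t. \<bar>t powr \<beta> * f t\<bar>) integrable_on {u..v}"
      using abs_w_integrable u unfolding w_def by simp
    fix t assume t: "t \<in> {u..v}"
    then show "0 \<le> t powr \<beta>"
      by simp
    show "\<bar>f t - f u\<bar> \<le> variation f u v"
      using norm_diff_le_variation[OF bounded_variation[OF u]] t by simp
  qed
  also have "\<dots> \<le> K + 2 * variation f u v * ((v - u) * ((1 + 2 powr \<beta>) * y powr \<beta>))"
  proof -
    have "0 \<le> 2 * variation f u v"
      using variation_nonneg[OF bounded_variation[OF u] u(2)] by simp
    then have "2 * variation f u v * integral {u..v} (\<lambda>t. t powr \<beta>)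
        \<le> 2 * variation f u v * ((v - u) * ((1 + 2 powr \<beta>) * y powr \<beta>))"
      using y by (intro mult_left_mono integral_powr_le_doubling)
    then show ?thesis
      using K[of u v] u by linarith
  qed
  finally show ?thesis .
qed

lemma N_le_variation:
  fixes n :: nat and K :: real
  assumes x: "0 < x" and n: "0 < n"
    and K: "\<And>a b. 0 \<le> a \<Longrightarrow> a \<le> b \<Longrightarrow> \<bar>integral {a..b} w\<bar> \<le> K"
  shows "N x \<le> real n * K + 2 * (1 + 2 powr \<beta>) * x powr (\<beta> + 1) / n * variation f x (2 * x)"
proof -
  define h where "h = x / n"
  define c where "c i = x + real i * h" for i
  define P where "P = (1 + 2 powr \<beta>) * x powr \<beta>"
  have h: "0 < h"
    using x n by (simp add: h_def)
  then have c_mono: "\<And>i. c i \<le> c (Suc i)" and c_ge: "\<And>i. x \<le> c i"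
    by (simp_all add: c_def)
  have c_le: "c i \<le> 2 * x" if "i \<le> n" for i
    using mult_right_mono[of "real i" n h] that h n by (simp add: c_def h_def)
  have c_0: "c 0 = x" and c_n: "c n = 2 * x"
    using n by (simp_all add: c_def h_def)
  have "N x = (\<Sum>i<n. integral {c i..c (Suc i)} (\<lambda>t. \<bar>w t\<bar>))"
    using integral_sum_subintervals[of c "\<lambda>t. \<bar>w t\<bar>" n] c_mono abs_w_integrable x
    unfolding N_def c_0 c_n by simp
  also have "\<dots> \<le> (\<Sum>i<n. K + 2 * variation f (c i) (c (Suc i)) * (h * P))"
  proof (rule sum_mono)
    fix i assume "i \<in> {..<n}"
    then have le: "c (Suc i) \<le> 2 * x"
      by (intro c_le) simp
    have step: "c (Suc i) - c i = h"
      by (simp add: c_def algebra_simps)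
    show "integral {c i..c (Suc i)} (\<lambda>t. \<bar>w t\<bar>) \<le> K + 2 * variation f (c i) (c (Suc i)) * (h * P)"
      using integral_abs_w_le_variation[OF x c_ge[of i] c_mono[of i] le K] step by (simp add: P_def)
  qed
  also have "\<dots> = real n * K + 2 * h * P * (\<Sum>i<n. variation f (c i) (c (Suc i)))"
    by (simp add: sum.distrib sum_distrib_left sum_distrib_right algebra_simps)
  also have "\<dots> \<le> real n * K + 2 * h * P * variation f x (2 * x)"
  proof -
    have "(\<Sum>i<n. variation f (c i) (c (Suc i))) \<le> variation f (c 0) (c n)"
      using x c_ge c_0 by (intro sum_variation_le_variation c_mono bounded_variation) auto
    moreover have "0 \<le> 2 * h * P"
      using h by (simp add: P_def)
    ultimately show ?thesis
      unfolding c_0 c_n by (intro add_left_mono mult_left_mono)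
  qed
  also have "\<dots> = real n * K + 2 * (1 + 2 powr \<beta>) * x powr (\<beta> + 1) / n * variation f x (2 * x)"
    using x by (simp add: h_def P_def powr_add)
  finally show ?thesis .
qed

lemma \<Lambda>_pos: "0 < \<Lambda>"
  using lam_ge_2 by (simp add: \<Lambda>_def add_pos_pos)

lemma integral_abs_div_le_W:
  assumes x: "0 < x"
  shows "integral {x / lam..lam * x} (\<lambda>t. \<bar>f t\<bar> / t) \<le> x powr - (\<beta> + 1) * \<Lambda> * W x"
proof -
  have lam: "0 < lam" and pos: "0 < x / lam"
    using lam_ge_2 x by auto
  have "integral {x / lam..lam * x} (\<lambda>t. \<bar>f t\<bar> / t)
      \<le> integral {x / lam..lam * x} (\<lambda>t. x powr - (\<beta> + 1) * \<Lambda> * \<bar>w t\<bar>)"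
  proof (rule integral_le)
    show "(\<lambda>t. \<bar>f t\<bar> / t) integrable_on {x / lam..lam * x}"
      using abs_div_integrable[OF absolutely_integrable_interval] pos by simp
    show "(\<lambda>t. x powr - (\<beta> + 1) * \<Lambda> * \<bar>w t\<bar>) integrable_on {x / lam..lam * x}"
      using abs_w_integrable pos by (intro integrable_on_mult_right) simp
    fix t assume t: "t \<in> {x / lam..lam * x}"
    then have "0 < t"
      using pos by auto
    then have "\<bar>f t\<bar> / t = \<bar>w t\<bar> * t powr - (\<beta> + 1)"
      by (simp add: w_def abs_mult powr_minus_divide powr_add [symmetric] field_simps)
    also have "\<dots> \<le> \<bar>w t\<bar> * (x powr - (\<beta> + 1) * \<Lambda>)"
      using powr_le_on_dilation[OF x lam, of t "- (\<beta> + 1)"] t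
      by (intro mult_left_mono) (auto simp: \<Lambda>_def add.commute)
    finally show "\<bar>f t\<bar> / t \<le> x powr - (\<beta> + 1) * \<Lambda> * \<bar>w t\<bar>"
      by (simp add: mult_ac)
  qed
  also have "\<dots> = x powr - (\<beta> + 1) * \<Lambda> * W x"
    unfolding W_def by simp
  finally show ?thesis .
qed

lemma N_le_W:
  fixes n :: nat and K :: real
  assumes x: "0 < x" and n: "0 < n"
    and K: "\<And>a b. 0 \<le> a \<Longrightarrow> a \<le> b \<Longrightarrow> \<bar>integral {a..b} w\<bar> \<le> K"
  shows "N x \<le> real n * K + 2 * (1 + 2 powr \<beta>) * C * \<Lambda> / n * W x"
proof -
  define D where "D = 2 * (1 + 2 powr \<beta>) * x powr (\<beta> + 1) / n"
  have D: "0 \<le> D"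
    by (simp add: D_def)
  have "N x \<le> real n * K + D * variation f x (2 * x)"
    unfolding D_def using N_le_variation[OF x n K] .
  also have "\<dots> \<le> real n * K + D * (C * (x powr - (\<beta> + 1) * \<Lambda> * W x))"
    using variation_le[OF x] integral_abs_div_le_W[OF x] C_nonneg D
    by (intro add_left_mono mult_left_mono) (auto intro: order.trans mult_left_mono)
  also have "\<dots> = real n * K + 2 * (1 + 2 powr \<beta>) * C * \<Lambda> / n * W x * (x powr (\<beta> + 1) * x powr - (\<beta> + 1))"
    by (simp add: D_def divide_inverse ac_simps)
  also have "\<dots> = real n * K + 2 * (1 + 2 powr \<beta>) * C * \<Lambda> / n * W x"
    using x by (simp flip: powr_add)
  finally show ?thesis .
qed

lemma W_le_sum_N:
  assumes x: "0 < x" and m: "lam\<^sup>2 \<le> 2 ^ m"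
  shows "W x \<le> (\<Sum>j<m. N (2 ^ j * (x / lam)))"
proof -
  define z where "z j = 2 ^ j * (x / lam)" for j :: nat
  have pos: "0 < x / lam"
    using x lam_ge_2 by simp
  have z_mono: "z j \<le> z (Suc j)" for j
  proof -
    have "0 \<le> z j"
      unfolding z_def using pos by (intro mult_nonneg_nonneg) auto
    then show ?thesis
      by (simp add: z_def)
  qed
  have "lam * x = lam\<^sup>2 * (x / lam)"
    using lam_ge_2 by (simp add: power2_eq_square)
  also have "\<dots> \<le> z m"
    unfolding z_def using m pos by (intro mult_right_mono) auto
  finally have "W x \<le> integral {z 0..z m} (\<lambda>t. \<bar>w t\<bar>)"
    unfolding W_def using pos by (intro integral_subset_le abs_w_integrable) (auto simp: z_def)
  also have "\<dots> = (\<Sum>j<m. integral {z j..z (Suc j)} (\<lambda>t. \<bar>w t\<bar>))"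
    using z_mono pos by (intro integral_sum_subintervals abs_w_integrable) (auto simp: z_def)
  also have "\<dots> = (\<Sum>j<m. N (2 ^ j * (x / lam)))"
    by (simp add: N_def z_def mult.assoc)
  finally show ?thesis .
qed

lemma N_polynomial_growth:
  obtains a c where "\<And>y R. 0 < y \<Longrightarrow> y \<le> R \<Longrightarrow> N y \<le> a + c * R powr (\<beta> + 1)"
proof -
  obtain T0 where T0: "\<And>t. T0 \<le> t \<Longrightarrow> \<bar>f t\<bar> < 1"
    using tendstoD[OF tendsto_zero, of 1] by (auto simp: eventually_at_top_linorder)
  define T where "T = max T0 1"
  have T: "0 < T" "\<And>t. T \<le> t \<Longrightarrow> \<bar>f t\<bar> \<le> 1"
    using T0 unfolding T_def by force+
  define G where "G = integral {0..2 * T} (\<lambda>t. \<bar>w t\<bar>)"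
  have G: "0 \<le> G"
    unfolding G_def using abs_w_integrable by (intro integral_nonneg) auto
  have "N y \<le> (G + (1 + 2 powr \<beta>) * T powr (\<beta> + 1)) + (1 + 2 powr \<beta>) * R powr (\<beta> + 1)"
    if y: "0 < y" "y \<le> R" for y R
  proof (cases "y < T")
    case True
    then have "N y \<le> G"
      unfolding N_def G_def using y by (intro integral_subset_le abs_w_integrable) auto
    then show ?thesis
      by (simp add: add_increasing2)
  next
    case False
    have "N y \<le> integral {y..2 * y} (\<lambda>t. t powr \<beta>)"
      unfolding N_def
    proof (rule integral_le)
      show "(\<lambda>t. t powr \<beta>) integrable_on {y..2 * y}"
        using y by (intro integrable_continuous_interval continuous_intros) auto
      fix t assume t: "t \<in> {y..2 * y}"
      then have "\<bar>f t\<bar> \<le> 1"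
        using False by (intro T(2)) auto
      then show "\<bar>w t\<bar> \<le> t powr \<beta>"
        by (simp add: w_def abs_mult mult_left_le)
    qed (use abs_w_integrable y in auto)
    also have "\<dots> \<le> (2 * y - y) * ((1 + 2 powr \<beta>) * y powr \<beta>)"
      using y by (intro integral_powr_le_doubling) auto
    also have "\<dots> = (1 + 2 powr \<beta>) * y powr (\<beta> + 1)"
      using y by (simp add: powr_add)
    also have "\<dots> \<le> (1 + 2 powr \<beta>) * (T powr (\<beta> + 1) + R powr (\<beta> + 1))"
      using False y T by (intro mult_left_mono powr_le_add_powr_endpoints) auto
    finally show ?thesis
      using G by (simp add: algebra_simps)
  qed
  then show ?thesis
    using that by blast
qed

definition U :: "real \<Rightarrow> real" where
  "U R = Sup (N ` {0<..R})"

lemma N_le_U: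
  assumes "0 < y" "y \<le> R"
  shows "N y \<le> U R"
proof -
  obtain a c where "\<And>y R. 0 < y \<Longrightarrow> y \<le> R \<Longrightarrow> N y \<le> a + c * R powr (\<beta> + 1)"
    using N_polynomial_growth by blast
  then have "bdd_above (N ` {0<..R})"
    by (intro bdd_aboveI2[where M = "a + c * R powr (\<beta> + 1)"]) auto
  then show ?thesis
    unfolding U_def using assms by (intro cSup_upper) auto
qed

lemma U_le:
  assumes "0 < R" "\<And>y. 0 < y \<Longrightarrow> y \<le> R \<Longrightarrow> N y \<le> B"
  shows "U R \<le> B"
  unfolding U_def using assms by (intro cSup_least) auto

lemma U_recurrence:
  fixes n m :: nat and K :: real
  assumes R: "0 < R" and n: "0 < n" and m: "lam\<^sup>2 \<le> 2 ^ m"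
    and K: "\<And>a b. 0 \<le> a \<Longrightarrow> a \<le> b \<Longrightarrow> \<bar>integral {a..b} w\<bar> \<le> K"
  shows "U R \<le> n * K + 2 * (1 + 2 powr \<beta>) * C * \<Lambda> * m / n * U (2 ^ m / lam * R)"
proof (rule U_le[OF R])
  define \<kappa> where "\<kappa> = 2 * (1 + 2 powr \<beta>) * C * \<Lambda>"
  fix y assume y: "0 < y" "y \<le> R"
  have "N (2 ^ j * (y / lam)) \<le> U (2 ^ m / lam * R)" if "j < m" for j
  proof (rule N_le_U)
    show "0 < 2 ^ j * (y / lam)"
      using y lam_ge_2 by simp
    have "(2::real) ^ j \<le> 2 ^ m"
      using that by (intro power_increasing) auto
    moreover have "y / lam \<le> R / lam"
      using y lam_ge_2 by (intro divide_right_mono) auto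
    ultimately show "2 ^ j * (y / lam) \<le> 2 ^ m / lam * R"
      using y lam_ge_2 mult_mono[of "(2::real) ^ j" "2 ^ m" "y / lam" "R / lam"] by simp
  qed
  then have "(\<Sum>j<m. N (2 ^ j * (y / lam))) \<le> (\<Sum>j<m. U (2 ^ m / lam * R))"
    by (intro sum_mono) simp
  then have "W y \<le> m * U (2 ^ m / lam * R)"
    using W_le_sum_N[OF y(1) m] by simp
  moreover have "0 \<le> \<kappa> / n"
    using C_nonneg \<Lambda>_pos by (simp add: \<kappa>_def)
  ultimately have "\<kappa> / n * W y \<le> \<kappa> / n * (m * U (2 ^ m / lam * R))"
    by (rule mult_left_mono)
  then show "N y \<le> n * K + \<kappa> * m / n * U (2 ^ m / lam * R)"
    using N_le_W[OF y(1) n K] unfolding \<kappa>_def by (simp add: mult_ac)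
qed

lemma N_bounded:
  obtains B where "\<And>y. 0 < y \<Longrightarrow> N y \<le> B"
proof -
  obtain K where K: "0 \<le> K" "\<And>a b. 0 \<le> a \<Longrightarrow> a \<le> b \<Longrightarrow> \<bar>integral {a..b} w\<bar> \<le> K"
    using integral_w_bounded by blast
  obtain m :: nat where m: "lam\<^sup>2 < 2 ^ m"
    using real_arch_pow[of 2 "lam\<^sup>2"] by auto
  define \<theta> where "\<theta> = 2 ^ m / lam"
  have \<theta>: "0 < \<theta>"
    using lam_ge_2 by (simp add: \<theta>_def)
  define \<kappa> where "\<kappa> = 2 * (1 + 2 powr \<beta>) * C * \<Lambda> * m"
  have \<kappa>: "0 \<le> \<kappa>"
    using C_nonneg \<Lambda>_pos by (simp add: \<kappa>_def)
  obtain n :: nat where n: "\<kappa> * (1 + \<theta> powr (\<beta> + 1)) < n"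
    using reals_Archimedean2 by blast
  have "0 \<le> \<kappa> * (1 + \<theta> powr (\<beta> + 1))"
    using \<kappa> by (intro mult_nonneg_nonneg add_nonneg_nonneg) auto
  then have n_pos: "0 < n"
    using n by linarith
  define \<epsilon> where "\<epsilon> = \<kappa> / n"
  have \<epsilon>: "0 \<le> \<epsilon>" "\<epsilon> + \<epsilon> * \<theta> powr (\<beta> + 1) < 1"
    using \<kappa> n n_pos by (simp_all add: \<epsilon>_def field_simps)
  moreover have "0 \<le> \<epsilon> * \<theta> powr (\<beta> + 1)"
    using \<epsilon>(1) by simp
  ultimately have \<epsilon>_lt: "\<epsilon> < 1" "\<epsilon> * \<theta> powr (\<beta> + 1) < 1"
    by linarith+
  obtain a c where growth: "\<And>y R. 0 < y \<Longrightarrow> y \<le> R \<Longrightarrow> N y \<le> a + c * R powr (\<beta> + 1)"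
    using N_polynomial_growth by blast
  have recurrence: "U R \<le> n * K + \<epsilon> * U (\<theta> * R)" if "0 < R" for R
    using U_recurrence[OF that n_pos less_imp_le[OF m] K(2)] by (simp add: \<epsilon>_def \<kappa>_def \<theta>_def)
  have U_growth: "U R \<le> a + c * R powr (\<beta> + 1)" if "0 < R" for R
    using growth that by (intro U_le) auto
  have "U R \<le> n * K / (1 - \<epsilon>)" if "0 < R" for R
    using \<theta> \<epsilon>(1) \<epsilon>_lt K(1) recurrence U_growth that
    by (intro bounded_of_dilation_recurrence[where U = U and E = "n * K" and a = a and c = c]) auto
  then have "N y \<le> n * K / (1 - \<epsilon>)" if "0 < y" for y
    using N_le_U[OF that order_refl] that by fastforce
  then show ?thesis
    by (rule that)
qed

lemma weighted_abs_bounded: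
  obtains M where "\<And>y. 0 < y \<Longrightarrow> y powr (\<beta> + 1) * \<bar>f y\<bar> \<le> M"
proof -
  obtain B where B: "\<And>y. 0 < y \<Longrightarrow> N y \<le> B"
    using N_bounded by blast
  obtain m :: nat where m: "lam\<^sup>2 < 2 ^ m"
    using real_arch_pow[of 2 "lam\<^sup>2"] by auto
  have "y powr (\<beta> + 1) * \<bar>f y\<bar> \<le> (C + 2) * \<Lambda> * (m * B)" if y: "0 < y" for y
  proof -
    have "W y \<le> (\<Sum>j<m. N (2 ^ j * (y / lam)))"
      using W_le_sum_N[OF y] m by simp
    also have "\<dots> \<le> m * B"
      using sum_mono[of "{..<m}" "\<lambda>j. N (2 ^ j * (y / lam))" "\<lambda>_. B"] B y lam_ge_2 by simp
    finally have W: "W y \<le> m * B" .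
    have "\<bar>f y\<bar> \<le> (C + 2) * (y powr - (\<beta> + 1) * \<Lambda> * W y)"
      using abs_le_integral_abs_div[OF y] mult_left_mono[OF integral_abs_div_le_W[OF y], of "C + 2"] C_nonneg
      by linarith
    also have "\<dots> \<le> (C + 2) * (y powr - (\<beta> + 1) * \<Lambda> * (m * B))"
      using W C_nonneg \<Lambda>_pos by (intro mult_left_mono) auto
    finally have "y powr (\<beta> + 1) * \<bar>f y\<bar>
        \<le> y powr (\<beta> + 1) * ((C + 2) * (y powr - (\<beta> + 1) * \<Lambda> * (m * B)))"
      by (intro mult_left_mono) auto
    also have "\<dots> = (C + 2) * \<Lambda> * (m * B) * (y powr (\<beta> + 1) * y powr - (\<beta> + 1))"
      by (simp add: ac_simps)
    also have "\<dots> = (C + 2) * \<Lambda> * (m * B)"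
      using y by (simp flip: powr_add)
    finally show ?thesis .
  qed
  then show ?thesis
    using that by blast
qed

end

theorem mainTheorem8:
  fixes f :: "real \<Rightarrow> real" and \<alpha> :: real
  assumes "GM f"
    and "(\<lambda>t. t powr (2 * \<alpha> + 1) * f t) absolutely_integrable_on {0<..<1}"
    and "\<exists>L. ((\<lambda>R. integral {0..R} (\<lambda>t. t powr (2 * \<alpha> + 1) * f t)) \<longlongrightarrow> L) at_top"
  shows "bdd_above ((\<lambda>t. t powr (2 * \<alpha> + 2) * \<bar>f t\<bar>) ` {0<..})"
proof -
  obtain C lam where "gm_function f C lam"
    using GM_imp_gm_function[OF assms(1)] .
  moreover obtain L where "((\<lambda>R. integral {0..R} (\<lambda>t. t powr (2 * \<alpha> + 1) * f t)) \<longlongrightarrow> L) at_top"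
    using assms(3) by blast
  ultimately interpret gm_moment f C lam "2 * \<alpha> + 1" L
    using assms(2) by (simp add: gm_moment_def gm_moment_axioms_def)
  obtain M where "\<And>y. 0 < y \<Longrightarrow> y powr (2 * \<alpha> + 1 + 1) * \<bar>f y\<bar> \<le> M"
    using weighted_abs_bounded by blast
  then show ?thesis
    by (intro bdd_aboveI2[of _ _ M]) (simp add: add.assoc)
qed

end
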